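(* Let $N=\{1,\dots,n\}$, let $C:2^N\to\mathbb{R}_{\ge0}$ with $C(\emptyset)=0$ and $\max_S C(S)$ bounded by a polynomial in $n$, and let $\mathcal{D}$ be a bounded product distribution on $2^N$. For $i\in N$ let $v_i=\mathbb{E}_{S\sim\mathcal{D}\mid i\notin S}[C(S\cup\{i\})-C(S)]$. Given samples $(S_j,C(S_j))$, $S_j$ i.i.d. from $\mathcal{D}$, let $\mathcal{S}_i$ (resp. $\mathcal{S}_{-i}$) be the collection of samples containing (resp. not containing) $i$, let $\mathrm{avg}(\mathcal{S})=\frac{1}{|\mathcal{S}|}\sum_{S\in\mathcal{S}}C(S)$, and $\tilde v_i=\mathrm{avg}(\mathcal{S}_i)-\mathrm{avg}(\mathcal{S}_{-i})$. Then for all $i\in N$ and any $\delta>0$, given $\mathrm{poly}(n,1/\delta,1/\epsilon)$ samples, with probability at least $1-\delta$: if $v_i\ge1/\mathrm{poly}(n)$ then $(1-\epsilon)v_i\le\tilde v_i\le(1+\epsilon)v_i$; if $|v_i|<1/\mathrm{poly}(n)$ then $|v_i-\tilde v_i|\le\epsilon$; if $v_i\le-1/\mathrm{poly}(n)$ then $(1+\epsilon)v_i\le\tilde v_i\le(1-\epsilon)v_i$.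
   Context: A bounded product distribution on $2^N$ includes each element independently, with marginal probabilities between $1/\mathrm{poly}(n)$ and $1-1/\mathrm{poly}(n)$. *)

theory Defs
  imports "HOL-Probability.Probability"
begin

abbreviation ground :: "nat \<Rightarrow> nat set" where
  "ground n \<equiv> {1..n}"

definition prod_dist :: "nat \<Rightarrow> (nat \<Rightarrow> real) \<Rightarrow> nat set pmf" where
  "prod_dist n p =
     map_pmf (\<lambda>f. {j \<in> ground n. f j})
       (Pi_pmf (ground n) False (\<lambda>j. bernoulli_pmf (p j)))"

definition bounded_marginals :: "real \<Rightarrow> nat \<Rightarrow> nat \<Rightarrow> (nat \<Rightarrow> real) \<Rightarrow> bool" where
  "bounded_marginals a k n p \<longleftrightarrow>
     (\<forall>j\<in>ground n. 1 / (a * real n ^ k) \<le> p j \<and> p j \<le> 1 - 1 / (a * real n ^ k))"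

definition bounded_cost :: "real \<Rightarrow> nat \<Rightarrow> nat \<Rightarrow> (nat set \<Rightarrow> real) \<Rightarrow> bool" where
  "bounded_cost a k n C \<longleftrightarrow> C {} = 0 \<and>
     (\<forall>S. S \<subseteq> ground n \<longrightarrow> 0 \<le> C S \<and> C S \<le> a * real n ^ k)"

definition marg_value :: "nat set pmf \<Rightarrow> (nat set \<Rightarrow> real) \<Rightarrow> nat \<Rightarrow> real" where
  "marg_value D C i =
     measure_pmf.expectation (cond_pmf D {S. i \<notin> S}) (\<lambda>S. C (insert i S) - C S)"

text \<open>Average of C over the samples with indices in J (a sub-collection, with multiplicity);
  the average of an empty collection is 0 (division by 0).\<close>
definition avg :: "(nat set \<Rightarrow> real) \<Rightarrow> (nat \<Rightarrow> nat set) \<Rightarrow> nat set \<Rightarrow> real" where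
  "avg C X J = (\<Sum>j\<in>J. C (X j)) / real (card J)"

definition est_value :: "(nat set \<Rightarrow> real) \<Rightarrow> nat \<Rightarrow> (nat \<Rightarrow> nat set) \<Rightarrow> nat \<Rightarrow> real" where
  "est_value C m X i = avg C X {j. j < m \<and> i \<in> X j} - avg C X {j. j < m \<and> i \<notin> X j}"

definition samples :: "nat \<Rightarrow> 'a pmf \<Rightarrow> (nat \<Rightarrow> 'a) pmf" where
  "samples m D = Pi_pmf {..<m} undefined (\<lambda>_. D)"

end

theory Submission
  imports Defs
begin

text \<open>Condition on whether the sample contains \<open>i\<close>. Since the distribution is a product,
  \<open>E[C(S) \<cdot> [i \<in> S]] = p\<^sub>i \<cdot> E[C(T \<union> {i})]\<close> and \<open>E[C(S) \<cdot> [i \<notin> S]] = (1 - p\<^sub>i) \<cdot> E[C(T)]\<close>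
  for \<open>T\<close> drawn from the product distribution on \<open>N - {i}\<close>, whereas \<open>v\<^sub>i = E[C(T \<union> {i})] - E[C(T)]\<close>.
  The estimator \<open>\<tilde>v\<^sub>i\<close> is a difference of two quotients of empirical means of the bounded
  quantities \<open>[i \<in> S]\<close>, \<open>C(S) [i \<in> S]\<close> and \<open>C(S) [i \<notin> S]\<close>. Hoeffding's inequality, weakened
  via \<open>exp(-y) \<le> 1/y\<close> to a polynomial tail, makes each empirical mean additively close to its
  expectation with high probability, and since \<open>p\<^sub>i\<close> and \<open>1 - p\<^sub>i\<close> are bounded below by
  \<open>1/poly(n)\<close>, the quotients stay close as well. An additive error of \<open>\<epsilon>/poly(n)\<close> is a
  multiplicative error \<open>\<epsilon>\<close> once \<open>|v\<^sub>i| \<ge> 1/poly(n)\<close>.\<close>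

lemma exp_minus_le_inverse:
  fixes y :: real
  assumes "y > 0"
  shows "exp (- y) \<le> 1 / y"
proof -
  have "y \<le> exp y" using exp_ge_add_one_self[of y] by linarith
  then have "inverse (exp y) \<le> inverse y" using assms by (intro le_imp_inverse_le) auto
  then show ?thesis by (simp add: exp_minus field_simps)
qed

lemma map_pmf_samples_component:
  assumes "j < m"
  shows "map_pmf (\<lambda>X. X j) (samples m D) = D"
  using assms unfolding samples_def by (subst Pi_pmf_component) auto

lemma samples_mean_close_prob_ge:
  fixes D :: "'a pmf" and g :: "'a \<Rightarrow> real"
  assumes m: "m > 0" and M: "M > 0" and t: "t > 0"
    and range: "\<And>x. x \<in> set_pmf D \<Longrightarrow> g x \<in> {0..M}"
  shows "measure_pmf.prob (samples m D)
      {X. \<bar>(\<Sum>j<m. g (X j)) / real m - measure_pmf.expectation D g\<bar> < t}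
    \<ge> 1 - M\<^sup>2 / (real m * t\<^sup>2)"
proof -
  define S where "S = samples m D"
  define E where "E = measure_pmf.expectation D g"
  note component = map_pmf_samples_component[where D=D and m=m, folded S_def]
  have distr: "distr (measure_pmf S) borel (\<lambda>X. g (X j)) = distr (measure_pmf D) borel g"
    if "j < m" for j
  proof -
    have "distr (measure_pmf S) borel (\<lambda>X. g (X j)) =
          distr (measure_pmf (map_pmf (\<lambda>X. X j) S)) borel g"
      unfolding map_pmf_rep_eq by (subst distr_distr) (auto simp: o_def)
    then show ?thesis using component[OF that] by simp
  qed
  interpret H: Hoeffding_ineq_iid "measure_pmf S" "{..<m}" "\<lambda>j X. g (X j)" "\<lambda>X. g (X 0)" 0 M E
  proof unfold_locales
    show "prob_space.indep_vars (measure_pmf S) (\<lambda>_. borel) (\<lambda>j X. g (X j)) {..<m}"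
      unfolding S_def samples_def
      by (intro prob_space.indep_vars_compose2[OF _ indep_vars_Pi_pmf])
         (auto simp: measure_pmf.prob_space_axioms)
  next
    show "AE X in measure_pmf S. g (X 0) \<in> {0..M}"
    proof (rule AE_pmfI)
      fix X assume "X \<in> set_pmf S"
      then have "X 0 \<in> set_pmf (map_pmf (\<lambda>X. X 0) S)" by simp
      then show "g (X 0) \<in> {0..M}" using component[of 0] m range by simp
    qed
  next
    have "measure_pmf.expectation S (\<lambda>X. g (X 0)) = measure_pmf.expectation (map_pmf (\<lambda>X. X 0) S) g"
      by simp
    then show "E \<equiv> measure_pmf.expectation S (\<lambda>X. g (X 0))"
      using component[of 0] m unfolding E_def by simp
  qed (use distr m in simp_all)
  have "measure_pmf.prob S {X. t \<le> \<bar>(\<Sum>j<m. g (X j)) / real m - E\<bar>}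
      \<le> 2 * exp (- (2 * real m * t\<^sup>2 / M\<^sup>2))"
    using H.Hoeffding_ineq_abs_ge'[of t] t M m by (simp add: lessThan_empty_iff)
  also have "\<dots> \<le> 2 * (1 / (2 * real m * t\<^sup>2 / M\<^sup>2))"
    using m t M by (intro mult_left_mono exp_minus_le_inverse) auto
  also have "\<dots> = M\<^sup>2 / (real m * t\<^sup>2)" by simp
  finally have bad: "measure_pmf.prob S {X. t \<le> \<bar>(\<Sum>j<m. g (X j)) / real m - E\<bar>}
      \<le> M\<^sup>2 / (real m * t\<^sup>2)" .
  have "{X. \<bar>(\<Sum>j<m. g (X j)) / real m - E\<bar> < t} =
        space (measure_pmf S) - {X. t \<le> \<bar>(\<Sum>j<m. g (X j)) / real m - E\<bar>}"
    by auto
  then show ?thesis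
    using bad measure_pmf.prob_compl[of "{X. t \<le> \<bar>(\<Sum>j<m. g (X j)) / real m - E\<bar>}" S]
    unfolding S_def E_def by simp
qed

lemma prob_Int3_ge:
  fixes P :: "'a pmf"
  assumes "A \<inter> B \<inter> C \<subseteq> G"
    and "measure_pmf.prob P A \<ge> 1 - \<alpha>" "measure_pmf.prob P B \<ge> 1 - \<beta>"
    and "measure_pmf.prob P C \<ge> 1 - \<gamma>"
  shows "measure_pmf.prob P G \<ge> 1 - (\<alpha> + \<beta> + \<gamma>)"
proof -
  let ?prob = "measure_pmf.prob P"
  have compl: "?prob (UNIV - X) = 1 - ?prob X" for X
    using measure_pmf.prob_compl[of X P] by simp
  have "?prob (UNIV - (A \<inter> B \<inter> C)) \<le> ?prob ((UNIV - A) \<union> (UNIV - B)) + ?prob (UNIV - C)"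
    by (subst Diff_Int)+ (rule measure_Un_le; simp)
  also have "?prob ((UNIV - A) \<union> (UNIV - B)) \<le> ?prob (UNIV - A) + ?prob (UNIV - B)"
    by (rule measure_Un_le) auto
  finally have "?prob (A \<inter> B \<inter> C) \<ge> 1 - (\<alpha> + \<beta> + \<gamma>)"
    using assms(2-4) unfolding compl by linarith
  also have "?prob (A \<inter> B \<inter> C) \<le> ?prob G"
    using assms(1) by (rule measure_pmf.finite_measure_mono) simp
  finally show ?thesis .
qed

lemma expectation_pair_pmf_finite:
  fixes g :: "'a \<times> 'b \<Rightarrow> real"
  assumes fA: "finite (set_pmf A)" and fB: "finite (set_pmf B)"
  shows "measure_pmf.expectation (pair_pmf A B) g =
         measure_pmf.expectation A (\<lambda>a. measure_pmf.expectation B (\<lambda>b. g (a, b)))"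
proof -
  have "measure_pmf.expectation (pair_pmf A B) g =
      (\<Sum>x\<in>set_pmf A \<times> set_pmf B. g x * pmf (pair_pmf A B) x)"
    by (rule integral_measure_pmf_real) (use fA fB in auto)
  also have "\<dots> = (\<Sum>a\<in>set_pmf A. \<Sum>b\<in>set_pmf B. g (a, b) * (pmf A a * pmf B b))"
    by (simp add: sum.cartesian_product case_prod_unfold pmf_pair[symmetric])
  also have "\<dots> = (\<Sum>a\<in>set_pmf A. (\<Sum>b\<in>set_pmf B. g (a, b) * pmf B b) * pmf A a)"
    by (simp add: sum_distrib_right sum_distrib_left mult_ac)
  also have "\<dots> = (\<Sum>a\<in>set_pmf A. measure_pmf.expectation B (\<lambda>b. g (a, b)) * pmf A a)"
    by (intro sum.cong refl arg_cong2[where f="(*)"] integral_measure_pmf_real[symmetric])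
       (use fB in auto)
  also have "\<dots> = measure_pmf.expectation A (\<lambda>a. measure_pmf.expectation B (\<lambda>b. g (a, b)))"
    by (rule integral_measure_pmf_real[symmetric]) (use fA in auto)
  finally show ?thesis .
qed

lemma expectation_cond_pmf_finite:
  fixes f :: "'a \<Rightarrow> real"
  assumes fin: "finite (set_pmf D)" and pos: "measure_pmf.prob D s > 0"
  shows "measure_pmf.expectation (cond_pmf D s) f =
         measure_pmf.expectation D (\<lambda>x. if x \<in> s then f x else 0) / measure_pmf.prob D s"
proof -
  have ne: "set_pmf D \<inter> s \<noteq> {}" using pos measure_pmf_zero_iff[of D s] by auto
  have "measure_pmf.expectation (cond_pmf D s) f = (\<Sum>x\<in>set_pmf D. f x * pmf (cond_pmf D s) x)"
    by (rule integral_measure_pmf_real) (use fin ne in auto)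
  also have "\<dots> = (\<Sum>x\<in>set_pmf D. (if x \<in> s then f x else 0) * pmf D x) / measure_pmf.prob D s"
    by (simp add: pmf_cond[OF ne] sum_divide_distrib, intro sum.cong refl) auto
  also have "(\<Sum>x\<in>set_pmf D. (if x \<in> s then f x else 0) * pmf D x) =
      measure_pmf.expectation D (\<lambda>x. if x \<in> s then f x else 0)"
    by (rule integral_measure_pmf_real[symmetric]) (use fin in auto)
  finally show ?thesis .
qed

lemma expectation_pmf_cong:
  fixes f g :: "'a \<Rightarrow> real"
  assumes "\<And>x. x \<in> set_pmf M \<Longrightarrow> f x = g x"
  shows "measure_pmf.expectation M f = measure_pmf.expectation M g"
  by (rule integral_cong_AE) (auto intro!: AE_pmfI assms)

lemma expectation_pmf_in_interval:
  fixes f :: "'a \<Rightarrow> real"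
  assumes "finite (set_pmf M)" "\<And>x. x \<in> set_pmf M \<Longrightarrow> f x \<in> {lo..hi}"
  shows "measure_pmf.expectation M f \<in> {lo..hi}"
  using assms
  by (auto intro!: measure_pmf.integral_ge_const measure_pmf.integral_le_const AE_pmfI
       integrable_measure_pmf_finite)

definition prod_dist_minus :: "nat \<Rightarrow> (nat \<Rightarrow> real) \<Rightarrow> nat \<Rightarrow> nat set pmf" where
  "prod_dist_minus n p i = map_pmf (\<lambda>f. {j \<in> ground n. f j} - {i})
       (Pi_pmf (ground n - {i}) False (\<lambda>j. bernoulli_pmf (p j)))"

lemma set_pmf_prod_dist: "set_pmf (prod_dist n p) \<subseteq> Pow (ground n)"
  unfolding prod_dist_def by auto

lemma set_pmf_prod_dist_minus: "set_pmf (prod_dist_minus n p i) \<subseteq> {T. T \<subseteq> ground n \<and> i \<notin> T}"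
  unfolding prod_dist_minus_def by auto

lemma finite_set_pmf_prod_dist: "finite (set_pmf (prod_dist n p))"
  by (rule finite_subset[OF set_pmf_prod_dist]) auto

lemma finite_set_pmf_prod_dist_minus: "finite (set_pmf (prod_dist_minus n p i))"
  by (rule finite_subset[OF set_pmf_prod_dist_minus]) auto

lemma prod_dist_split:
  assumes i: "i \<in> ground n"
  shows "prod_dist n p = map_pmf (\<lambda>(y, T). if y then insert i T else T)
            (pair_pmf (bernoulli_pmf (p i)) (prod_dist_minus n p i))"
proof -
  have "ground n = insert i (ground n - {i})" using i by auto
  then have "prod_dist n p = map_pmf (\<lambda>f. {j \<in> ground n. f j})
      (Pi_pmf (insert i (ground n - {i})) False (\<lambda>j. bernoulli_pmf (p j)))"
    unfolding prod_dist_def by simp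
  also have "\<dots> = map_pmf (\<lambda>f. {j \<in> ground n. f j}) (map_pmf (\<lambda>(y, f). f(i := y))
      (pair_pmf (bernoulli_pmf (p i)) (Pi_pmf (ground n - {i}) False (\<lambda>j. bernoulli_pmf (p j)))))"
    by (subst Pi_pmf_insert) auto
  also have "\<dots> = map_pmf (\<lambda>(y, T). if y then insert i T else T)
            (pair_pmf (bernoulli_pmf (p i)) (prod_dist_minus n p i))"
    unfolding prod_dist_minus_def pair_map_pmf2 pmf.map_comp
    by (intro pmf.map_cong refl) (use i in \<open>auto simp: o_def split: if_splits\<close>)
  finally show ?thesis .
qed

lemma expectation_prod_dist_split:
  fixes f :: "nat set \<Rightarrow> real"
  assumes i: "i \<in> ground n" and p: "0 \<le> p i" "p i \<le> 1"
  shows "measure_pmf.expectation (prod_dist n p) f =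
     p i * measure_pmf.expectation (prod_dist_minus n p i) (\<lambda>T. f (insert i T))
     + (1 - p i) * measure_pmf.expectation (prod_dist_minus n p i) f"
proof -
  have fin: "finite (set_pmf (bernoulli_pmf (p i)))" by (rule finite_subset[of _ UNIV]) auto
  have "measure_pmf.expectation (prod_dist n p) f =
      measure_pmf.expectation (pair_pmf (bernoulli_pmf (p i)) (prod_dist_minus n p i))
        (\<lambda>(y, T). f (if y then insert i T else T))"
    unfolding prod_dist_split[OF i] by (simp add: case_prod_unfold if_distrib)
  also have "\<dots> = measure_pmf.expectation (bernoulli_pmf (p i))
      (\<lambda>y. measure_pmf.expectation (prod_dist_minus n p i) (\<lambda>T. f (if y then insert i T else T)))"
    using expectation_pair_pmf_finite[OF fin finite_set_pmf_prod_dist_minus,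
        where g="\<lambda>(y, T). f (if y then insert i T else T)"] by simp
  finally show ?thesis using p by (simp add: mult_ac)
qed

context
  fixes n :: nat and p :: "nat \<Rightarrow> real" and i :: nat
  assumes i: "i \<in> ground n" and p: "0 \<le> p i" "p i \<le> 1"
begin

lemma expectation_prod_dist_mem:
  "measure_pmf.expectation (prod_dist n p) (\<lambda>S. if i \<in> S then f S else 0) =
     p i * measure_pmf.expectation (prod_dist_minus n p i) (\<lambda>T. f (insert i T))"
proof -
  have "measure_pmf.expectation (prod_dist_minus n p i) (\<lambda>S. if i \<in> S then f S else 0) = 0"
    using set_pmf_prod_dist_minus by (subst expectation_pmf_cong[where g="\<lambda>_. 0"]) auto
  then show ?thesis by (simp add: expectation_prod_dist_split[where p=p, OF i p])
qed

lemma expectation_prod_dist_not_mem: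
  "measure_pmf.expectation (prod_dist n p) (\<lambda>S. if i \<notin> S then f S else 0) =
     (1 - p i) * measure_pmf.expectation (prod_dist_minus n p i) f"
proof -
  have "measure_pmf.expectation (prod_dist_minus n p i) (\<lambda>S. if i \<notin> S then f S else 0) =
        measure_pmf.expectation (prod_dist_minus n p i) f"
    by (rule expectation_pmf_cong) (use set_pmf_prod_dist_minus in auto)
  then show ?thesis by (simp add: expectation_prod_dist_split[where p=p, OF i p])
qed

lemma prob_prod_dist_not_mem: "measure_pmf.prob (prod_dist n p) {S. i \<notin> S} = 1 - p i"
proof -
  have "measure_pmf.prob (prod_dist n p) {S. i \<notin> S} =
        measure_pmf.expectation (prod_dist n p) (indicator {S. i \<notin> S})"
    by simp
  also have "\<dots> = measure_pmf.expectation (prod_dist n p) (\<lambda>S. if i \<notin> S then (1::real) else 0)"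
    by (rule expectation_pmf_cong) (auto simp: indicator_def)
  also have "\<dots> = 1 - p i" by (subst expectation_prod_dist_not_mem) simp
  finally show ?thesis .
qed

lemma marg_value_prod_dist:
  assumes "p i < 1"
  shows "marg_value (prod_dist n p) C i =
    measure_pmf.expectation (prod_dist_minus n p i) (\<lambda>T. C (insert i T)) -
    measure_pmf.expectation (prod_dist_minus n p i) C"
proof -
  have pos: "measure_pmf.prob (prod_dist n p) {S. i \<notin> S} > 0"
    using prob_prod_dist_not_mem assms by simp
  have "marg_value (prod_dist n p) C i =
     measure_pmf.expectation (prod_dist n p) (\<lambda>S. if i \<notin> S then C (insert i S) - C S else 0)
       / (1 - p i)"
    unfolding marg_value_def
    by (subst expectation_cond_pmf_finite[OF finite_set_pmf_prod_dist pos])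
       (simp add: prob_prod_dist_not_mem)
  also have "\<dots> = measure_pmf.expectation (prod_dist_minus n p i) (\<lambda>T. C (insert i T) - C T)"
    using assms by (subst expectation_prod_dist_not_mem) simp
  also have "\<dots> = measure_pmf.expectation (prod_dist_minus n p i) (\<lambda>T. C (insert i T)) -
      measure_pmf.expectation (prod_dist_minus n p i) C"
    by (rule Bochner_Integration.integral_diff)
       (auto intro: integrable_measure_pmf_finite finite_set_pmf_prod_dist_minus)
  finally show ?thesis .
qed

end

lemma quotient_error_le:
  fixes \<alpha> k q \<mu> t M \<pi> :: real
  assumes \<pi>: "0 < \<pi>" "\<pi> / 2 \<le> k" and \<alpha>: "\<bar>\<alpha> - q * \<mu>\<bar> < t" and k: "\<bar>k - q\<bar> < t"
    and \<mu>: "\<mu> \<in> {0..M}"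
  shows "\<bar>\<alpha> / k - \<mu>\<bar> \<le> 2 * t * (M + 1) / \<pi>"
proof -
  have "k > 0" using \<pi> by linarith
  have "\<bar>\<mu> * (q - k)\<bar> \<le> M * t"
    using \<mu> k by (simp add: abs_mult abs_minus_commute mult_mono)
  then have "\<bar>\<alpha> - \<mu> * k\<bar> \<le> t * (M + 1)"
    using \<alpha> abs_triangle_ineq[of "\<alpha> - q * \<mu>" "\<mu> * (q - k)"] by (simp add: algebra_simps)
  then have "\<bar>\<alpha> / k - \<mu>\<bar> \<le> t * (M + 1) / k"
    using \<open>k > 0\<close> by (simp add: field_simps)
  also have "\<dots> \<le> t * (M + 1) / (\<pi> / 2)"
    using \<pi> \<mu> k by (intro divide_left_mono) auto
  finally show ?thesis by (simp add: mult_ac)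
qed

lemma difference_of_quotients_error_le:
  fixes A B K m q \<mu>1 \<mu>0 t M \<pi> :: real
  assumes \<pi>: "0 < \<pi>" "\<pi> \<le> q" "q \<le> 1 - \<pi>" and t: "t \<le> \<pi> / 2" and m: "0 < m"
    and K: "\<bar>K / m - q\<bar> < t"
    and A: "\<bar>A / m - q * \<mu>1\<bar> < t" and B: "\<bar>B / m - (1 - q) * \<mu>0\<bar> < t"
    and \<mu>: "\<mu>1 \<in> {0..M}" "\<mu>0 \<in> {0..M}"
  shows "\<bar>(A / K - B / (m - K)) - (\<mu>1 - \<mu>0)\<bar> \<le> 4 * t * (M + 1) / \<pi>"
proof -
  have "\<bar>(A / m) / (K / m) - \<mu>1\<bar> \<le> 2 * t * (M + 1) / \<pi>"
    by (rule quotient_error_le[OF \<pi>(1) _ A K \<mu>(1)]) (use K \<pi> t in linarith)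
  moreover have "\<bar>(B / m) / (1 - K / m) - \<mu>0\<bar> \<le> 2 * t * (M + 1) / \<pi>"
    by (rule quotient_error_le[OF \<pi>(1) _ B _ \<mu>(2)]) (use K \<pi> t in linarith)+
  moreover have "(A / m) / (K / m) = A / K" and "(B / m) / (1 - K / m) = B / (m - K)"
    using m by (simp_all add: field_simps)
  ultimately show ?thesis by linarith
qed

lemma est_value_eq_quotients:
  fixes C :: "nat set \<Rightarrow> real" and X :: "nat \<Rightarrow> nat set" and m i :: nat
  defines "K \<equiv> (\<Sum>j<m. if i \<in> X j then 1 else 0 :: real)"
  shows "est_value C m X i =
     (\<Sum>j<m. if i \<in> X j then C (X j) else 0) / K
       - (\<Sum>j<m. if i \<notin> X j then C (X j) else 0) / (real m - K)"
proof -
  have in_eq: "{j. j < m \<and> i \<in> X j} = {j\<in>{..<m}. i \<in> X j}"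
    and out_eq: "{j. j < m \<and> i \<notin> X j} = {j\<in>{..<m}. i \<notin> X j}" by auto
  have card_in: "real (card {j\<in>{..<m}. i \<in> X j}) = K"
    unfolding K_def by (simp only: real_of_card sum.inter_filter[OF finite_lessThan])
  have "real (card {j\<in>{..<m}. i \<notin> X j}) = (\<Sum>j<m. 1 - (if i \<in> X j then 1 else 0 :: real))"
    by (simp only: real_of_card sum.inter_filter[OF finite_lessThan]) (intro sum.cong, auto)
  also have "\<dots> = real m - K" unfolding K_def by (simp add: sum_subtractf)
  finally have card_out: "real (card {j\<in>{..<m}. i \<notin> X j}) = real m - K" .
  show ?thesis
    unfolding est_value_def avg_def in_eq out_eq card_in card_out
    by (simp only: sum.inter_filter[OF finite_lessThan])
qed

lemma est_value_deviation_prob_ge: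
  fixes C :: "nat set \<Rightarrow> real"
  assumes i: "i \<in> ground n" and \<pi>: "0 < \<pi>" "\<pi> \<le> p i" "p i \<le> 1 - \<pi>"
    and C: "\<And>S. S \<subseteq> ground n \<Longrightarrow> C S \<in> {0..M}"
    and t: "0 < t" "t \<le> \<pi> / 2" and m: "m > 0"
  shows "measure_pmf.prob (samples m (prod_dist n p))
      {X. \<bar>est_value C m X i - marg_value (prod_dist n p) C i\<bar> \<le> 4 * t * (M + 1) / \<pi>}
    \<ge> 1 - ((M + 1)\<^sup>2 / (real m * t\<^sup>2) + (M + 1)\<^sup>2 / (real m * t\<^sup>2) + (M + 1)\<^sup>2 / (real m * t\<^sup>2))"
proof -
  define D where "D = prod_dist n p"
  define \<mu>1 where "\<mu>1 = measure_pmf.expectation (prod_dist_minus n p i) (\<lambda>T. C (insert i T))"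
  define \<mu>0 where "\<mu>0 = measure_pmf.expectation (prod_dist_minus n p i) C"
  define g1 where "g1 S = (if i \<in> S then 1 else 0 :: real)" for S
  define g2 where "g2 S = (if i \<in> S then C S else 0)" for S
  define g3 where "g3 S = (if i \<notin> S then C S else 0)" for S
  define close where "close g e = {X. \<bar>(\<Sum>j<m. g (X j)) / real m - e\<bar> < t}"
    for g :: "nat set \<Rightarrow> real" and e
  have p: "0 \<le> p i" "p i \<le> 1" "p i < 1" using \<pi> by linarith+
  have M: "0 \<le> M" using C[of "{}"] by auto
  have close_prob: "measure_pmf.prob (samples m D) (close g (measure_pmf.expectation D g))
      \<ge> 1 - (M + 1)\<^sup>2 / (real m * t\<^sup>2)"
    if "\<And>S. S \<subseteq> ground n \<Longrightarrow> g S \<in> {0..M + 1}" for g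
    unfolding close_def
    by (rule samples_mean_close_prob_ge[OF m _ t(1)])
       (use M that set_pmf_prod_dist[of n p] in \<open>auto simp: D_def\<close>)
  have "\<mu>1 \<in> {0..M}" unfolding \<mu>1_def
    by (rule expectation_pmf_in_interval[OF finite_set_pmf_prod_dist_minus])
       (use C set_pmf_prod_dist_minus[of n p i] i in auto)
  moreover have "\<mu>0 \<in> {0..M}" unfolding \<mu>0_def
    by (rule expectation_pmf_in_interval[OF finite_set_pmf_prod_dist_minus])
       (use C set_pmf_prod_dist_minus[of n p i] in auto)
  ultimately have \<mu>: "\<mu>1 \<in> {0..M}" "\<mu>0 \<in> {0..M}" .
  have E: "measure_pmf.expectation D g1 = p i" "measure_pmf.expectation D g2 = p i * \<mu>1"
    "measure_pmf.expectation D g3 = (1 - p i) * \<mu>0"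
    unfolding D_def g1_def g2_def g3_def \<mu>1_def \<mu>0_def
    by (simp_all add: expectation_prod_dist_mem[where p=p, OF i p(1,2)]
      expectation_prod_dist_not_mem[where p=p, OF i p(1,2)])
  have sub: "close g1 (p i) \<inter> close g2 (p i * \<mu>1) \<inter> close g3 ((1 - p i) * \<mu>0)
      \<subseteq> {X. \<bar>est_value C m X i - marg_value D C i\<bar> \<le> 4 * t * (M + 1) / \<pi>}"
  proof safe
    fix X assume "X \<in> close g1 (p i)" "X \<in> close g2 (p i * \<mu>1)" "X \<in> close g3 ((1 - p i) * \<mu>0)"
    then show "\<bar>est_value C m X i - marg_value D C i\<bar> \<le> 4 * t * (M + 1) / \<pi>"
      using difference_of_quotients_error_le[OF \<pi> t(2) _ _ _ _ \<mu>] m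
      unfolding close_def est_value_eq_quotients D_def marg_value_prod_dist[where p=p, OF i p]
        \<mu>1_def[symmetric] \<mu>0_def[symmetric] g1_def g2_def g3_def
      by simp
  qed
  have range: "g S \<in> {0..M + 1}" if "S \<subseteq> ground n" "g \<in> {g1, g2, g3}" for g S
    using C[OF that(1)] M that(2) unfolding g1_def g2_def g3_def by auto
  show ?thesis
    unfolding D_def[symmetric]
    by (rule prob_Int3_ge[OF sub];
        use close_prob[of g1] close_prob[of g2] close_prob[of g3] E range in simp)
qed

lemma est_value_close_prob_ge:
  fixes C :: "nat set \<Rightarrow> real"
  assumes i: "i \<in> ground n" and \<pi>: "0 < \<pi>" "\<pi> \<le> p i" "p i \<le> 1 - \<pi>"
    and C: "\<And>S. S \<subseteq> ground n \<Longrightarrow> C S \<in> {0..M}"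
    and \<eta>: "0 < \<eta>" "\<eta> \<le> 1" and \<delta>: "0 < \<delta>"
    and m: "48 * ((M + 1)\<^sup>2 / (\<pi> * \<eta>))\<^sup>2 / \<delta> \<le> real m"
  shows "measure_pmf.prob (samples m (prod_dist n p))
      {X. \<bar>est_value C m X i - marg_value (prod_dist n p) C i\<bar> \<le> \<eta>} \<ge> 1 - \<delta>"
proof -
  define t where "t = \<pi> * \<eta> / (4 * (M + 1))"
  have M: "0 \<le> M" using C[of "{}"] by auto
  have "t \<le> \<pi> / 4"
    unfolding t_def using \<pi> \<eta> M by (intro frac_le) (auto simp: mult_left_le)
  moreover have "0 < t" unfolding t_def using \<pi> \<eta> M by simp
  ultimately have t: "0 < t" "t \<le> \<pi> / 2" using \<pi> by linarith+
  have "0 < 48 * ((M + 1)\<^sup>2 / (\<pi> * \<eta>))\<^sup>2 / \<delta>" using \<pi> \<eta> \<delta> M by simp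
  with m have m_pos: "m > 0" by simp
  have "(M + 1)\<^sup>2 / (real m * t\<^sup>2) = 48 * ((M + 1)\<^sup>2 / (\<pi> * \<eta>))\<^sup>2 / (3 * real m)"
    unfolding t_def using \<pi> \<eta> M m_pos by (simp add: field_simps power2_eq_square)
  also have "\<dots> \<le> \<delta> / 3"
    using m m_pos \<delta> unfolding pos_divide_le_eq[OF \<delta>] by (simp add: divide_le_eq mult.commute)
  finally have "1 - \<delta> \<le> 1 - ((M + 1)\<^sup>2 / (real m * t\<^sup>2) + (M + 1)\<^sup>2 / (real m * t\<^sup>2)
      + (M + 1)\<^sup>2 / (real m * t\<^sup>2))" by linarith
  also have "\<dots> \<le> measure_pmf.prob (samples m (prod_dist n p))
      {X. \<bar>est_value C m X i - marg_value (prod_dist n p) C i\<bar> \<le> 4 * t * (M + 1) / \<pi>}"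
    by (rule est_value_deviation_prob_ge[where p=p and C=C, OF i \<pi> C t m_pos])
  also have "4 * t * (M + 1) / \<pi> = \<eta>"
    unfolding t_def using \<pi>(1) M by (simp add: divide_simps)
  finally show ?thesis .
qed

lemma relative_or_absolute_error:
  fixes v w \<epsilon> x :: real
  assumes x: "x > 0" and \<epsilon>: "\<epsilon> > 0" and wv: "\<bar>w - v\<bar> \<le> min \<epsilon> 1 * min (1 / x) 1"
  shows "(v \<ge> 1 / x \<longrightarrow> (1 - \<epsilon>) * v \<le> w \<and> w \<le> (1 + \<epsilon>) * v) \<and>
         (\<bar>v\<bar> < 1 / x \<longrightarrow> \<bar>v - w\<bar> \<le> \<epsilon>) \<and>
         (v \<le> - 1 / x \<longrightarrow> (1 + \<epsilon>) * v \<le> w \<and> w \<le> (1 - \<epsilon>) * v)"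
proof -
  have rel: "\<bar>w - v\<bar> \<le> \<epsilon> * (1 / x)" and abs: "\<bar>w - v\<bar> \<le> \<epsilon>"
    using order_trans[OF wv mult_mono[of "min \<epsilon> 1" \<epsilon> "min (1 / x) 1" "1 / x"]]
      order_trans[OF wv mult_mono[of "min \<epsilon> 1" \<epsilon> "min (1 / x) 1" 1]] x \<epsilon> by auto
  show ?thesis
  proof (intro conjI impI)
  show "\<bar>v - w\<bar> \<le> \<epsilon>" using abs by (simp add: abs_minus_commute)
  assume "v \<ge> 1 / x"
  then have "\<epsilon> * (1 / x) \<le> \<epsilon> * v" using \<epsilon> by (intro mult_left_mono) auto
  with rel show "(1 - \<epsilon>) * v \<le> w" "w \<le> (1 + \<epsilon>) * v" by (auto simp: algebra_simps abs_le_iff)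
next
  assume "v \<le> - 1 / x"
  then have "\<epsilon> * (1 / x) \<le> \<epsilon> * (- v)" using \<epsilon> by (intro mult_left_mono) auto
  with rel show "(1 + \<epsilon>) * v \<le> w" "w \<le> (1 - \<epsilon>) * v" by (auto simp: algebra_simps abs_le_iff)
  qed
qed

lemma sample_size_le_poly:
  fixes a c \<delta> \<epsilon> :: real and n k l :: nat
  assumes a: "a > 0" and c: "c > 0" and n: "n \<ge> 1" and \<delta>: "\<delta> > 0" and \<epsilon>: "\<epsilon> > 0"
  shows "48 * ((a * real n ^ k + 1)\<^sup>2 * (a * real n ^ k) / (min \<epsilon> 1 * min (1 / (c * real n ^ l)) 1))\<^sup>2 / \<delta>
    \<le> 48 * (a + 1) ^ 6 * (c + 1)\<^sup>2 * (real n + 1 / \<delta> + 1 / \<epsilon>) ^ (6 * k + 2 * l + 3)"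
proof -
  define R where "R = real n + 1 / \<delta> + 1 / \<epsilon>"
  define M where "M = a * real n ^ k"
  define x where "x = c * real n ^ l"
  define Y where "Y = (a + 1) * R ^ k"
  have "1 \<le> real n" "0 < 1 / \<delta>" "0 < 1 / \<epsilon>" using n \<delta> \<epsilon> by simp_all
  then have R: "1 \<le> R" "real n \<le> R" "1 / \<delta> \<le> R" "1 / \<epsilon> \<le> R"
    unfolding R_def by linarith+
  have nR: "real n ^ j \<le> R ^ j" and R1: "1 \<le> R ^ j" for j
    using R by (simp_all add: power_mono one_le_power)
  have "M \<le> a * R ^ k" unfolding M_def using a nR by (intro mult_left_mono) auto
  then have M: "0 \<le> M" "M + 1 \<le> Y"
    using a R1[of k] unfolding M_def Y_def distrib_right by (simp, linarith)
  have "x \<le> c * R ^ l" unfolding x_def using c nR by (intro mult_left_mono) auto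
  moreover have "0 \<le> c * R ^ l" using c R1[of l] by simp
  ultimately have "max x 1 \<le> (c + 1) * R ^ l"
    using R1[of l] unfolding distrib_right by (intro max.boundedI) linarith+
  moreover have "0 < x" using c n unfolding x_def by simp
  ultimately have x: "0 < x" "max x 1 \<le> (c + 1) * R ^ l" by simp_all
  have "1 / (min \<epsilon> 1 * min (1 / x) 1) = max (1 / \<epsilon>) 1 * max x 1"
    using \<epsilon> x by (auto simp: min_def max_def)
  also have "\<dots> \<le> R * ((c + 1) * R ^ l)"
    using R x by (intro mult_mono) auto
  finally have inv_\<eta>: "1 / (min \<epsilon> 1 * min (1 / x) 1) \<le> R * ((c + 1) * R ^ l)" .
  have "(M + 1)\<^sup>2 * M \<le> Y\<^sup>2 * Y"
    using M by (intro mult_mono power_mono) auto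
  then have "(M + 1)\<^sup>2 * M * (1 / (min \<epsilon> 1 * min (1 / x) 1)) \<le> Y\<^sup>2 * Y * (R * ((c + 1) * R ^ l))"
    using inv_\<eta> M \<epsilon> x by (intro mult_mono) auto
  then have "48 * ((M + 1)\<^sup>2 * M / (min \<epsilon> 1 * min (1 / x) 1))\<^sup>2 * (1 / \<delta>)
      \<le> 48 * (Y\<^sup>2 * Y * (R * ((c + 1) * R ^ l)))\<^sup>2 * R"
    using M \<epsilon> x R \<delta> by (intro mult_mono mult_left_mono power_mono) auto
  also have "\<dots> = 48 * (a + 1) ^ 6 * (c + 1)\<^sup>2 * R ^ (6 * k + 2 * l + 3)"
    unfolding Y_def by (simp add: power_mult_distrib power_add power_mult[symmetric] eval_nat_numeral mult_ac)
  finally show ?thesis unfolding R_def M_def x_def by simp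
qed

theorem lemma11:
  fixes a c :: real and k l :: nat
  assumes "a > 0" and "c > 0"
  shows "\<exists>b::real. \<exists>r::nat. b > 0 \<and>
    (\<forall>(n::nat) (p::nat \<Rightarrow> real) (C::nat set \<Rightarrow> real) (i::nat) (\<delta>::real) (\<epsilon>::real) (m::nat).
       bounded_marginals a k n p \<longrightarrow> bounded_cost a k n C \<longrightarrow> i \<in> ground n \<longrightarrow>
       \<delta> > 0 \<longrightarrow> \<epsilon> > 0 \<longrightarrow> real m \<ge> b * (real n + 1 / \<delta> + 1 / \<epsilon>) ^ r \<longrightarrow>
       measure_pmf.prob (samples m (prod_dist n p))
         {X. let v = marg_value (prod_dist n p) C i; w = est_value C m X i in
               (v \<ge> 1 / (c * real n ^ l) \<longrightarrow> (1 - \<epsilon>) * v \<le> w \<and> w \<le> (1 + \<epsilon>) * v) \<and>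
               (\<bar>v\<bar> < 1 / (c * real n ^ l) \<longrightarrow> \<bar>v - w\<bar> \<le> \<epsilon>) \<and>
               (v \<le> - 1 / (c * real n ^ l) \<longrightarrow> (1 + \<epsilon>) * v \<le> w \<and> w \<le> (1 - \<epsilon>) * v)}
         \<ge> 1 - \<delta>)"
proof (intro exI[of _ "48 * (a + 1) ^ 6 * (c + 1)\<^sup>2"] exI[of _ "6 * k + 2 * l + 3"]
    conjI allI impI, goal_cases)
  case 1
  show ?case using assms by simp
next
  case (2 n p C i \<delta> \<epsilon> m)
  define M where "M = a * real n ^ k"
  define \<eta> where "\<eta> = min \<epsilon> 1 * min (1 / (c * real n ^ l)) 1"
  have n: "n \<ge> 1" using 2(3) by simp
  have M: "M > 0" and cn: "c * real n ^ l > 0" using assms n unfolding M_def by simp_all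
  have \<eta>: "0 < \<eta>" "\<eta> \<le> 1" using 2(5) cn unfolding \<eta>_def by (auto intro: mult_le_one)
  have "48 * ((M + 1)\<^sup>2 / (1 / M * \<eta>))\<^sup>2 / \<delta> = 48 * ((M + 1)\<^sup>2 * M / \<eta>)\<^sup>2 / \<delta>"
    by simp
  also have "\<dots> \<le> 48 * (a + 1) ^ 6 * (c + 1)\<^sup>2 * (real n + 1 / \<delta> + 1 / \<epsilon>) ^ (6 * k + 2 * l + 3)"
    unfolding M_def \<eta>_def by (rule sample_size_le_poly[OF assms n 2(4,5)])
  finally have "48 * ((M + 1)\<^sup>2 / (1 / M * \<eta>))\<^sup>2 / \<delta> \<le> real m" using 2(6) by linarith
  then have "1 - \<delta> \<le> measure_pmf.prob (samples m (prod_dist n p))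
      {X. \<bar>est_value C m X i - marg_value (prod_dist n p) C i\<bar> \<le> \<eta>}"
    using 2(1-4) \<eta> M unfolding bounded_marginals_def bounded_cost_def M_def
    by (intro est_value_close_prob_ge[where \<pi> = "1 / M" and M = M]) (auto simp: M_def)
  also have "\<dots> \<le> measure_pmf.prob (samples m (prod_dist n p)) {X. let v = marg_value (prod_dist n p) C i;
        w = est_value C m X i in
          (v \<ge> 1 / (c * real n ^ l) \<longrightarrow> (1 - \<epsilon>) * v \<le> w \<and> w \<le> (1 + \<epsilon>) * v) \<and>
          (\<bar>v\<bar> < 1 / (c * real n ^ l) \<longrightarrow> \<bar>v - w\<bar> \<le> \<epsilon>) \<and>
          (v \<le> - 1 / (c * real n ^ l) \<longrightarrow> (1 + \<epsilon>) * v \<le> w \<and> w \<le> (1 - \<epsilon>) * v)}"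
    using relative_or_absolute_error[OF cn 2(5)] unfolding \<eta>_def Let_def
    by (intro measure_pmf.finite_measure_mono) auto
  finally show ?case .
qed

end
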